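(* Let $\mathcal{A}$ be a visibly pushdown automaton with $m$ states over the pushdown alphabet $\Sigma$. Then the $\Sigma$-diameter of $\mathcal{A}$ is at most $2^{m^2}$; that is, for all states $p,q$ such that there exists a balanced word $u\in\Sigma^*$ with $p\xrightarrow{u}q$, there exists such a balanced word of length at most $2^{m^2}$.
   Context: Pushdown alphabet $\Sigma=\Sigma_+\cup\Sigma_-\cup\Sigma_=$ (push, pop, neutral symbols); a VPA pushes one stack symbol on each push symbol, pops one on each pop symbol, and does not touch the stack on neutral symbols. A word is balanced if #push − #pop $=0$ and every prefix has #push − #pop $\geq 0$. For balanced $u$, $p\xrightarrow{u}q$ means $(\sigma,p)\xrightarrow{u}(\sigma,q)$ for some (equivalently any) stack content $\sigma$. *)

theory Defs
  imports Main
begin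

datatype kind = Push | Pop | Neutral

text \<open>A visibly pushdown automaton (initial/final states are irrelevant for the
  diameter and are omitted). Push transitions (p,a,q,g): read push letter a in p,
  go to q and push g. Pop transitions (p,a,g,q): read pop letter a in p with g on
  top of the stack, pop g and go to q.\<close>
record ('s,'a,'g) vpa =
  states :: "'s set"
  stack_syms :: "'g set"
  push_tr :: "('s \<times> 'a \<times> 's \<times> 'g) set"
  pop_tr :: "('s \<times> 'a \<times> 'g \<times> 's) set"
  int_tr :: "('s \<times> 'a \<times> 's) set"

definition wf_vpa :: "('a \<Rightarrow> kind) \<Rightarrow> ('s,'a,'g) vpa \<Rightarrow> bool" where
  "wf_vpa kd A \<longleftrightarrow> finite (states A) \<and> finite (stack_syms A) \<and>
     (\<forall>(p,a,q,g)\<in>push_tr A. p \<in> states A \<and> q \<in> states A \<and> g \<in> stack_syms A \<and> kd a = Push) \<and>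
     (\<forall>(p,a,g,q)\<in>pop_tr A. p \<in> states A \<and> q \<in> states A \<and> g \<in> stack_syms A \<and> kd a = Pop) \<and>
     (\<forall>(p,a,q)\<in>int_tr A. p \<in> states A \<and> q \<in> states A \<and> kd a = Neutral)"

text \<open>Runs between configurations (stack, state); the head of the list is the top.\<close>
inductive run :: "('s,'a,'g) vpa \<Rightarrow> 'g list \<Rightarrow> 's \<Rightarrow> 'a list \<Rightarrow> 'g list \<Rightarrow> 's \<Rightarrow> bool"
  for A where
  run_nil: "run A \<sigma> p [] \<sigma> p"
| run_push: "(p,a,q,g) \<in> push_tr A \<Longrightarrow> run A (g # \<sigma>) q w \<sigma>' r \<Longrightarrow> run A \<sigma> p (a # w) \<sigma>' r"
| run_pop: "(p,a,g,q) \<in> pop_tr A \<Longrightarrow> run A \<sigma> q w \<sigma>' r \<Longrightarrow> run A (g # \<sigma>) p (a # w) \<sigma>' r"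
| run_int: "(p,a,q) \<in> int_tr A \<Longrightarrow> run A \<sigma> q w \<sigma>' r \<Longrightarrow> run A \<sigma> p (a # w) \<sigma>' r"

definition height :: "('a \<Rightarrow> kind) \<Rightarrow> 'a list \<Rightarrow> int" where
  "height kd w = int (length (filter (\<lambda>a. kd a = Push) w)) - int (length (filter (\<lambda>a. kd a = Pop) w))"

definition balanced :: "('a \<Rightarrow> kind) \<Rightarrow> 'a list \<Rightarrow> bool" where
  "balanced kd w \<longleftrightarrow> height kd w = 0 \<and> (\<forall>n \<le> length w. height kd (take n w) \<ge> 0)"

text \<open>p --u--> q for balanced u: from the empty stack back to the empty stack
  (equivalently from any stack \<sigma> to \<sigma>).\<close>
definition reach_bal :: "('a \<Rightarrow> kind) \<Rightarrow> ('s,'a,'g) vpa \<Rightarrow> 's \<Rightarrow> 'a list \<Rightarrow> 's \<Rightarrow> bool" where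
  "reach_bal kd A p u q \<longleftrightarrow> balanced kd u \<and> (\<exists>\<sigma>. run A \<sigma> p u \<sigma> q)"

end

theory Submission
  imports Defs
begin

text \<open>Balanced words are generated by the grammar w ::= [] | c | a w b | w w (c neutral,
  a push, b pop), and a run on a balanced word leaves the stack unchanged. Hence the pairs of
  states connected by balanced words form the least relation containing the identity on states
  and the neutral transitions that is closed under composition and under wrapping with a push
  and a pop transition agreeing on the stack symbol. Build it in rounds: each round at most
  doubles the length of the witnessing words (wrapping adds two letters), and the relation grows
  strictly until it stabilises. As it starts nonempty and lives among the m^2 pairs of
  states, it is complete after m^2 - 1 rounds, with witnesses of length at most
  2^(m^2).\<close>

fun kind_height :: "kind \<Rightarrow> int" where
  "kind_height Push = 1"
| "kind_height Pop = -1"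
| "kind_height Neutral = 0"

lemma height_Nil [simp]: "height kd [] = 0"
  by (simp add: height_def)

lemma height_Cons [simp]: "height kd (c # w) = kind_height (kd c) + height kd w"
  by (cases "kd c") (simp_all add: height_def)

lemma height_append [simp]: "height kd (x @ y) = height kd x + height kd y"
  by (simp add: height_def)

lemma balanced_Nil: "balanced kd []"
  by (simp add: balanced_def)

lemma balanced_append:
  assumes "balanced kd x" "balanced kd y"
  shows "balanced kd (x @ y)"
  unfolding balanced_def
proof (intro conjI allI impI)
  show "height kd (x @ y) = 0"
    using assms by (simp add: balanced_def)
  fix n assume n: "n \<le> length (x @ y)"
  show "height kd (take n (x @ y)) \<ge> 0"
  proof (cases "n \<le> length x")
    case True
    then show ?thesis using assms by (simp add: balanced_def)
  next
    case False
    then have "take n (x @ y) = x @ take (n - length x) y" by simp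
    moreover have "n - length x \<le> length y" using n by simp
    ultimately show ?thesis using assms by (simp add: balanced_def)
  qed
qed

lemma balanced_Neutral: "kd c = Neutral \<Longrightarrow> balanced kd [c]"
  unfolding balanced_def by (auto simp: le_Suc_eq)

lemma balanced_wrap:
  assumes "kd a = Push" "kd b = Pop" "balanced kd v"
  shows "balanced kd (a # v @ [b])"
  unfolding balanced_def
proof (intro conjI allI impI)
  show "height kd (a # v @ [b]) = 0"
    using assms by (simp add: balanced_def)
  fix n assume n: "n \<le> length (a # v @ [b])"
  show "height kd (take n (a # v @ [b])) \<ge> 0"
  proof (cases n)
    case (Suc n')
    with n consider "n' \<le> length v" | "n' = Suc (length v)" by (auto simp: le_Suc_eq)
    then show ?thesis
      using Suc assms by cases (simp_all add: balanced_def)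
  qed simp
qed

lemma balanced_Cons_Neutral:
  assumes "balanced kd (c # w)" "kd c = Neutral"
  shows "balanced kd w"
  unfolding balanced_def
proof (intro conjI allI impI)
  show "height kd w = 0"
    using assms by (simp add: balanced_def)
  fix n assume "n \<le> length w"
  then have "height kd (take (Suc n) (c # w)) \<ge> 0"
    using assms(1) unfolding balanced_def by (metis Suc_le_mono length_Cons)
  then show "height kd (take n w) \<ge> 0"
    using assms(2) by simp
qed

lemma balanced_Cons_not_Pop: "balanced kd (c # w) \<Longrightarrow> kd c \<noteq> Pop"
  unfolding balanced_def by (auto dest: spec[of _ 1])

lemma first_unmatched_Pop:
  assumes "height kd x < 0"
  obtains v b w where "x = v @ b # w" "kd b = Pop" "balanced kd v"
proof -
  \<comment> \<open>cut x just before its shortest prefix of negative height\<close>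
  define n where "n = (LEAST n. height kd (take n x) < 0)"
  have neg: "height kd (take n x) < 0"
    unfolding n_def by (rule LeastI[of _ "length x"]) (simp add: assms)
  have nonneg: "height kd (take j x) \<ge> 0" if "j < n" for j
    using not_less_Least[OF that[unfolded n_def]] n_def by simp
  obtain j where j: "n = Suc j"
    using neg by (cases n) auto
  have "j < length x"
    using neg nonneg[of j] j by (cases "j < length x") auto
  then have x: "x = take j x @ x ! j # drop (Suc j) x"
    by (simp add: id_take_nth_drop)
  have "height kd (take j x) + kind_height (kd (x ! j)) < 0"
    using neg j \<open>j < length x\<close> by (simp add: take_Suc_conv_app_nth)
  with nonneg[of j] j have "kd (x ! j) = Pop" "height kd (take j x) = 0"
    by (cases "kd (x ! j)"; simp)+
  moreover have "balanced kd (take j x)"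
    unfolding balanced_def using nonneg j \<open>height kd (take j x) = 0\<close> by (simp add: min_def)
  ultimately show ?thesis
    using that x by blast
qed

lemma balanced_Cons_Push_split:
  assumes "balanced kd (a # r)" "kd a = Push"
  obtains v b w where "r = v @ b # w" "kd b = Pop" "balanced kd v" "balanced kd w"
proof -
  have "height kd r < 0"
    using assms by (simp add: balanced_def)
  then obtain v b w where split: "r = v @ b # w" "kd b = Pop" "balanced kd v"
    by (rule first_unmatched_Pop)
  have "balanced kd w"
    unfolding balanced_def
  proof (intro conjI allI impI)
    show "height kd w = 0"
      using assms split by (simp add: balanced_def)
    fix j assume "j \<le> length w"
    then have "length v + j + 2 \<le> length (a # r)"
      using split(1) by simp
    moreover have "take (length v + j + 2) (a # r) = a # v @ b # take j w"
      using split(1) by simp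
    ultimately have "height kd (a # v @ b # take j w) \<ge> 0"
      using assms(1) unfolding balanced_def by metis
    then show "height kd (take j w) \<ge> 0"
      using assms split by (simp add: balanced_def)
  qed
  with split that show ?thesis by blast
qed

inductive well_nested :: "('a \<Rightarrow> kind) \<Rightarrow> 'a list \<Rightarrow> bool" for kd where
  well_nested_Nil: "well_nested kd []"
| well_nested_Neutral: "kd c = Neutral \<Longrightarrow> well_nested kd [c]"
| well_nested_wrap: "kd a = Push \<Longrightarrow> kd b = Pop \<Longrightarrow> well_nested kd v \<Longrightarrow> well_nested kd (a # v @ [b])"
| well_nested_append: "well_nested kd u \<Longrightarrow> well_nested kd v \<Longrightarrow> well_nested kd (u @ v)"

lemma well_nested_imp_balanced: "well_nested kd w \<Longrightarrow> balanced kd w"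
  by (induction rule: well_nested.induct)
    (auto intro: balanced_Nil balanced_Neutral balanced_wrap balanced_append)

lemma balanced_imp_well_nested: "balanced kd w \<Longrightarrow> well_nested kd w"
proof (induction "length w" arbitrary: w rule: less_induct)
  case less
  show ?case
  proof (cases w)
    case Nil
    then show ?thesis by (simp add: well_nested_Nil)
  next
    case (Cons c r)
    consider "kd c = Push" | "kd c = Neutral"
      using less.prems Cons by (cases "kd c") (auto dest: balanced_Cons_not_Pop)
    then show ?thesis
    proof cases
      case 1
      then obtain v b w' where split: "r = v @ b # w'" "kd b = Pop" "balanced kd v" "balanced kd w'"
        using balanced_Cons_Push_split less.prems Cons by metis
      then have "well_nested kd (c # v @ [b])" "well_nested kd w'"
        using less.hyps Cons 1 by (auto intro: well_nested_wrap)
      then show ?thesis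
        using well_nested_append Cons split(1) by fastforce
    next
      case 2
      then have "well_nested kd r"
        using less Cons by (simp add: balanced_Cons_Neutral)
      then show ?thesis
        using well_nested_append[OF well_nested_Neutral, of kd c r] 2 Cons by simp
    qed
  qed
qed

lemma balanced_iff_well_nested: "balanced kd w \<longleftrightarrow> well_nested kd w"
  using balanced_imp_well_nested well_nested_imp_balanced by blast

lemma run_append: "run A \<sigma> p u \<sigma>1 s \<Longrightarrow> run A \<sigma>1 s v \<sigma>' q \<Longrightarrow> run A \<sigma> p (u @ v) \<sigma>' q"
  by (induction rule: run.induct) (auto intro: run.intros)

lemma run_appendE:
  assumes "run A \<sigma> p (u @ v) \<sigma>' q"
  obtains \<sigma>1 s where "run A \<sigma> p u \<sigma>1 s" "run A \<sigma>1 s v \<sigma>' q"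
proof -
  have "\<exists>\<sigma>1 s. run A \<sigma> p u \<sigma>1 s \<and> run A \<sigma>1 s v \<sigma>' q"
    using assms
  proof (induction u arbitrary: \<sigma> p)
    case (Cons a u)
    from Cons.prems show ?case
      by cases (fastforce dest: Cons.IH intro: run.intros)+
  qed (auto intro: run.intros)
  with that show ?thesis by blast
qed

lemma run_Cons_PushE:
  assumes "wf_vpa kd A" "kd a = Push" "run A \<sigma> p (a # w) \<sigma>' q"
  obtains p' g where "(p, a, p', g) \<in> push_tr A" "run A (g # \<sigma>) p' w \<sigma>' q"
  using assms(3) by cases (use assms(1,2) in \<open>auto simp: wf_vpa_def\<close>)

lemma run_Cons_PopE:
  assumes "wf_vpa kd A" "kd a = Pop" "run A \<sigma> p (a # w) \<sigma>' q"
  obtains g \<sigma>0 p' where "\<sigma> = g # \<sigma>0" "(p, a, g, p') \<in> pop_tr A" "run A \<sigma>0 p' w \<sigma>' q"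
  using assms(3) by cases (use assms(1,2) in \<open>auto simp: wf_vpa_def\<close>)

lemma run_Cons_NeutralE:
  assumes "wf_vpa kd A" "kd a = Neutral" "run A \<sigma> p (a # w) \<sigma>' q"
  obtains p' where "(p, a, p') \<in> int_tr A" "run A \<sigma> p' w \<sigma>' q"
  using assms(3) by cases (use assms(1,2) in \<open>auto simp: wf_vpa_def\<close>)

lemma well_nested_run_same_stack:
  assumes "wf_vpa kd A" "well_nested kd w" "run A \<sigma> p w \<sigma>' q"
  shows "\<sigma>' = \<sigma>"
  using assms(2,3)
proof (induction arbitrary: \<sigma> \<sigma>' p q rule: well_nested.induct)
  case well_nested_Nil
  then show ?case by (auto elim: run.cases)
next
  case (well_nested_Neutral c)
  then show ?case
    by (auto elim!: run_Cons_NeutralE[OF assms(1)] elim: run.cases)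
next
  case (well_nested_wrap a b v)
  obtain p' g where "run A (g # \<sigma>) p' (v @ [b]) \<sigma>' q"
    using run_Cons_PushE[OF assms(1) well_nested_wrap(1,5)] .
  then obtain \<sigma>1 s where "run A (g # \<sigma>) p' v \<sigma>1 s" "run A \<sigma>1 s [b] \<sigma>' q"
    by (rule run_appendE)
  with well_nested_wrap.IH have "run A (g # \<sigma>) s [b] \<sigma>' q"
    by metis
  then show ?case
    by (auto elim!: run_Cons_PopE[OF assms(1) well_nested_wrap(2)] elim: run.cases)
next
  case (well_nested_append u v)
  then show ?case
    by (metis run_appendE)
qed

definition saturation_step :: "('s, 'a, 'g) vpa \<Rightarrow> ('s \<times> 's) set \<Rightarrow> ('s \<times> 's) set" where
  "saturation_step A S = S \<union> S O S \<union> {(p, q). \<exists>a. (p, a, q) \<in> int_tr A}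
     \<union> {(p, q). \<exists>a p' g q' b. (p, a, p', g) \<in> push_tr A \<and> (p', q') \<in> S \<and> (q', b, g, q) \<in> pop_tr A}"

definition summary :: "('s, 'a, 'g) vpa \<Rightarrow> nat \<Rightarrow> ('s \<times> 's) set" where
  "summary A i = (saturation_step A ^^ i) (Id_on (states A))"

lemma summary_0: "summary A 0 = Id_on (states A)"
  by (simp add: summary_def)

lemma summary_Suc: "summary A (Suc i) = saturation_step A (summary A i)"
  by (simp add: summary_def)

lemma saturation_step_inflationary: "S \<subseteq> saturation_step A S"
  unfolding saturation_step_def by blast

lemma summary_mono: "i \<le> j \<Longrightarrow> summary A i \<subseteq> summary A j"
  by (rule lift_Suc_mono_le[of "summary A"]) (simp_all add: summary_Suc saturation_step_inflationary)

lemma saturation_step_states: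
  "wf_vpa kd A \<Longrightarrow> S \<subseteq> states A \<times> states A \<Longrightarrow> saturation_step A S \<subseteq> states A \<times> states A"
  unfolding saturation_step_def wf_vpa_def by blast

lemma summary_states: "wf_vpa kd A \<Longrightarrow> summary A i \<subseteq> states A \<times> states A"
  by (induction i) (auto simp: summary_0 summary_Suc dest: saturation_step_states)

lemma summary_imp_run:
  assumes "wf_vpa kd A" "(p, q) \<in> summary A i"
  shows "\<exists>u. well_nested kd u \<and> (\<forall>\<sigma>. run A \<sigma> p u \<sigma> q) \<and> length u \<le> 2 ^ (i + 1)"
  using assms(2)
proof (induction i arbitrary: p q)
  case 0
  then show ?case
    by (intro exI[of _ "[]"]) (auto simp: summary_0 well_nested_Nil intro: run.intros)
next
  case (Suc i)
  have "(p, q) \<in> saturation_step A (summary A i)"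
    using Suc.prems by (simp add: summary_Suc)
  then consider "(p, q) \<in> summary A i"
    | s where "(p, s) \<in> summary A i" "(s, q) \<in> summary A i"
    | a where "(p, a, q) \<in> int_tr A"
    | a p' g q' b where "(p, a, p', g) \<in> push_tr A" "(p', q') \<in> summary A i" "(q', b, g, q) \<in> pop_tr A"
    unfolding saturation_step_def by blast
  then show ?case
  proof cases
    case 1
    then show ?thesis
      using Suc.IH by fastforce
  next
    case 2
    then obtain u v where "well_nested kd u" "\<forall>\<sigma>. run A \<sigma> p u \<sigma> s" "length u \<le> 2 ^ (i + 1)"
      "well_nested kd v" "\<forall>\<sigma>. run A \<sigma> s v \<sigma> q" "length v \<le> 2 ^ (i + 1)"
      using Suc.IH by meson
    then show ?thesis
      by (intro exI[of _ "u @ v"]) (auto intro: well_nested_append run_append)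
  next
    case 3
    then have "kd a = Neutral"
      using assms(1) by (auto simp: wf_vpa_def)
    then show ?thesis
      using 3 by (intro exI[of _ "[a]"]) (auto intro: well_nested_Neutral run.intros)
  next
    case 4
    then have "kd a = Push" "kd b = Pop"
      using assms(1) by (auto simp: wf_vpa_def)
    obtain v where v: "well_nested kd v" "\<forall>\<sigma>. run A \<sigma> p' v \<sigma> q'" "length v \<le> 2 ^ (i + 1)"
      using Suc.IH 4(2) by blast
    have "run A \<sigma> p (a # v @ [b]) \<sigma> q" for \<sigma>
    proof -
      have "run A (g # \<sigma>) q' [b] \<sigma> q"
        using 4(3) by (auto intro: run.intros)
      with v(2) have "run A (g # \<sigma>) p' (v @ [b]) \<sigma> q"
        by (blast intro: run_append)
      with 4(1) show ?thesis
        by (rule run_push)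
    qed
    moreover have "length (a # v @ [b]) \<le> 2 ^ (Suc i + 1)"
      using v(3) by (simp, use one_le_power[of "2::nat" i] in linarith)
    ultimately show ?thesis
      using well_nested_wrap[OF \<open>kd a = Push\<close> \<open>kd b = Pop\<close> v(1)] by blast
  qed
qed

lemma summary_trans:
  assumes "(p, s) \<in> summary A i" "(s, q) \<in> summary A j"
  shows "(p, q) \<in> summary A (Suc (max i j))"
proof -
  have "(p, s) \<in> summary A (max i j)" "(s, q) \<in> summary A (max i j)"
    using assms summary_mono[of _ "max i j" A] by (meson max.cobounded1 max.cobounded2 subsetD)+
  then show ?thesis
    by (auto simp: summary_Suc saturation_step_def)
qed

lemma run_imp_summary:
  assumes "wf_vpa kd A" "well_nested kd w" "run A \<sigma> p w \<sigma> q" "p \<in> states A"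
  shows "\<exists>i. (p, q) \<in> summary A i"
  using assms(2-4)
proof (induction arbitrary: \<sigma> p q rule: well_nested.induct)
  case well_nested_Nil
  then have "(p, q) \<in> summary A 0"
    by (auto simp: summary_0 elim: run.cases)
  then show ?case ..
next
  case (well_nested_Neutral c)
  then obtain p' where "(p, c, p') \<in> int_tr A" "run A \<sigma> p' [] \<sigma> q"
    using run_Cons_NeutralE[OF assms(1)] by blast
  then have "(p, q) \<in> summary A 1"
    by (auto simp: summary_Suc saturation_step_def elim: run.cases)
  then show ?case ..
next
  case (well_nested_wrap a b v)
  obtain p' g where push: "(p, a, p', g) \<in> push_tr A" "run A (g # \<sigma>) p' (v @ [b]) \<sigma> q"
    using run_Cons_PushE[OF assms(1) well_nested_wrap(1) well_nested_wrap.prems(1)] .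
  then obtain \<sigma>1 s where inner: "run A (g # \<sigma>) p' v \<sigma>1 s" and "run A \<sigma>1 s [b] \<sigma> q"
    by (metis run_appendE)
  moreover have "\<sigma>1 = g # \<sigma>"
    using well_nested_run_same_stack[OF assms(1) well_nested_wrap(3) inner] .
  ultimately obtain q' where pop: "(s, b, g, q') \<in> pop_tr A" "run A \<sigma> q' [] \<sigma> q"
    using run_Cons_PopE[OF assms(1) well_nested_wrap(2)] by blast
  have "p' \<in> states A"
    using assms(1) push(1) by (auto simp: wf_vpa_def)
  then obtain i where "(p', s) \<in> summary A i"
    using well_nested_wrap.IH inner \<open>\<sigma>1 = g # \<sigma>\<close> by blast
  with push(1) pop have "(p, q) \<in> summary A (Suc i)"
    by (auto simp: summary_Suc saturation_step_def elim: run.cases)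
  then show ?case ..
next
  case (well_nested_append u v)
  then obtain \<sigma>1 s where first: "run A \<sigma> p u \<sigma>1 s" and "run A \<sigma>1 s v \<sigma> q"
    by (metis run_appendE)
  moreover have "\<sigma>1 = \<sigma>"
    using well_nested_run_same_stack[OF assms(1) well_nested_append(1) first] .
  ultimately obtain i where i: "(p, s) \<in> summary A i" and "run A \<sigma> s v \<sigma> q"
    using well_nested_append.IH(1) well_nested_append.prems(2) by blast
  moreover have "s \<in> states A"
    using i summary_states[OF assms(1)] by blast
  ultimately obtain j where "(s, q) \<in> summary A j"
    using well_nested_append.IH(2) by blast
  with i show ?case
    by (blast intro: summary_trans)
qed

lemma funpow_inflationary_stabilises:
  assumes inflationary: "\<And>X. X \<subseteq> f X"
    and closed: "\<And>X. X \<subseteq> S \<Longrightarrow> f X \<subseteq> S"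
    and "X \<subseteq> S" "finite S" "card S \<le> card X + n"
  shows "(f ^^ i) X \<subseteq> (f ^^ n) X"
proof -
  have mono: "(f ^^ i) X \<subseteq> (f ^^ j) X" if "i \<le> j" for i j
    by (rule lift_Suc_mono_le[of "\<lambda>k. (f ^^ k) X", OF _ that]) (simp add: inflationary)
  have bounded: "(f ^^ i) X \<subseteq> S" for i
    by (induction i) (simp_all add: assms(3) closed)
  show ?thesis
  proof (cases "\<exists>k<n. (f ^^ Suc k) X = (f ^^ k) X")
    case True
    then obtain k where k: "k < n" "(f ^^ Suc k) X = (f ^^ k) X"
      by blast
    have fixed: "(f ^^ j) X = (f ^^ k) X" if "k \<le> j" for j
      using that by (induction rule: dec_induct) (use k(2) in simp_all)
    have "(f ^^ i) X \<subseteq> (f ^^ max i k) X"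
      by (rule mono) simp
    also have "\<dots> = (f ^^ k) X"
      by (rule fixed) simp
    also have "\<dots> \<subseteq> (f ^^ n) X"
      using k(1) by (intro mono) simp
    finally show ?thesis .
  next
    case False
    have "card X + j \<le> card ((f ^^ j) X)" if "j \<le> n" for j
      using that
    proof (induction j)
      case (Suc j)
      have "(f ^^ j) X \<subset> (f ^^ Suc j) X"
        using False Suc.prems mono[of j "Suc j"] by (auto simp: Suc_le_eq)
      then have "card ((f ^^ j) X) < card ((f ^^ Suc j) X)"
        using bounded \<open>finite S\<close> by (meson finite_subset psubset_card_mono)
      with Suc show ?case by simp
    qed simp
    then have "(f ^^ n) X = S"
      using bounded \<open>finite S\<close> assms(5) by (meson card_seteq order.trans order_refl)
    with bounded show ?thesis by blast
  qed
qed

theorem fact3: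
  fixes kd :: "'a \<Rightarrow> kind" and A :: "('s,'a,'g) vpa" and m :: nat
  assumes "wf_vpa kd A" and "card (states A) = m"
    and "p \<in> states A" and "q \<in> states A"
    and "\<exists>u. reach_bal kd A p u q"
  shows "\<exists>u. reach_bal kd A p u q \<and> length u \<le> 2 ^ (m ^ 2)"
proof -
  have fin: "finite (states A)"
    using assms(1) by (simp add: wf_vpa_def)
  obtain u0 \<sigma> where "well_nested kd u0" "run A \<sigma> p u0 \<sigma> q"
    using assms(5) by (auto simp: reach_bal_def balanced_iff_well_nested)
  then obtain i where "(p, q) \<in> summary A i"
    using run_imp_summary[OF assms(1) _ _ assms(3)] by blast
  moreover have "summary A i \<subseteq> summary A (m ^ 2 - 1)"
    unfolding summary_def
  proof (rule funpow_inflationary_stabilises[where S = "states A \<times> states A"])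
    have "0 < card (Id_on (states A))"
      using fin assms(3) by (auto simp: card_gt_0_iff Id_on_def)
    then show "card (states A \<times> states A) \<le> card (Id_on (states A)) + (m ^ 2 - 1)"
      by (simp add: card_cartesian_product assms(2) power2_eq_square)
  qed (auto simp: fin saturation_step_inflationary saturation_step_states[OF assms(1)])
  ultimately obtain u where u: "well_nested kd u" "run A [] p u [] q" "length u \<le> 2 ^ (m ^ 2 - 1 + 1)"
    using summary_imp_run[OF assms(1)] by blast
  have "0 < m"
    using fin assms(2,3) card_gt_0_iff by blast
  then have "m ^ 2 - 1 + 1 = m ^ 2"
    by simp
  with u show ?thesis
    unfolding reach_bal_def balanced_iff_well_nested by metis
qed

end
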